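(* Let $\mathcal{M}$ be an ergodic (not necessarily reversible) Markov chain on a finite state space. Then $$\Phi(\mathcal{M})\ \ge\ \frac{\frac12-\frac{1}{2e}}{\tau(\mathcal{M},\frac{1}{2e})}.$$
   Context: A (discrete-time) Markov chain on a finite state space $\Omega$ with transition matrix $P$ is ergodic if irreducible and aperiodic; it then has a unique stationary distribution $\pi>0$. Variation distance: $\|\theta_1-\theta_2\|=\frac12\sum_i|\theta_1(i)-\theta_2(i)|$. Mixing time: $\tau_x(\mathcal{M},\varepsilon)=\min\{t>0 \text{ integer}: \|P^{t'}(x,\cdot)-\pi\|\le\varepsilon \ \forall t'\ge t\}$, $\tau(\mathcal{M},\varepsilon)=\max_x\tau_x(\mathcal{M},\varepsilon)$. Conductance: for $S\subset\Omega$ with $0<\pi(S)<1$ and $\bar S=\Omega\setminus S$, $\Phi_S(\mathcal{M})=\dfrac{\sum_{i\in S}\sum_{j\in\bar S}\pi(i)P(i,j)+\sum_{i\in\bar S}\sum_{j\in S}\pi(i)P(i,j)}{2\pi(S)\pi(\bar S)}$, and $\Phi(\mathcal{M})=\min_S\Phi_S(\mathcal{M})$ over all such $S$. *)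

theory Defs
  imports "HOL-Analysis.Analysis"
begin

definition stochastic :: "('a::finite \<Rightarrow> 'a \<Rightarrow> real) \<Rightarrow> bool" where
  "stochastic P \<longleftrightarrow> (\<forall>i j. 0 \<le> P i j) \<and> (\<forall>i. (\<Sum>j\<in>UNIV. P i j) = 1)"

fun mpow :: "('a::finite \<Rightarrow> 'a \<Rightarrow> real) \<Rightarrow> nat \<Rightarrow> 'a \<Rightarrow> 'a \<Rightarrow> real" where
  "mpow P 0 = (\<lambda>i j. if i = j then 1 else 0)"
| "mpow P (Suc t) = (\<lambda>i j. \<Sum>k\<in>UNIV. mpow P t i k * P k j)"

definition irreducible_chain :: "('a::finite \<Rightarrow> 'a \<Rightarrow> real) \<Rightarrow> bool" where
  "irreducible_chain P \<longleftrightarrow> (\<forall>i j. \<exists>t>0. mpow P t i j > 0)"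

definition aperiodic_chain :: "('a::finite \<Rightarrow> 'a \<Rightarrow> real) \<Rightarrow> bool" where
  "aperiodic_chain P \<longleftrightarrow> (\<forall>i. Gcd {t. t > 0 \<and> mpow P t i i > 0} = (1::nat))"

definition ergodic_chain :: "('a::finite \<Rightarrow> 'a \<Rightarrow> real) \<Rightarrow> bool" where
  "ergodic_chain P \<longleftrightarrow> stochastic P \<and> irreducible_chain P \<and> aperiodic_chain P"

definition stationary_dist :: "('a::finite \<Rightarrow> 'a \<Rightarrow> real) \<Rightarrow> ('a \<Rightarrow> real) \<Rightarrow> bool" where
  "stationary_dist P \<pi> \<longleftrightarrow> (\<forall>i. 0 \<le> \<pi> i) \<and> (\<Sum>i\<in>UNIV. \<pi> i) = 1 \<and>
     (\<forall>j. (\<Sum>i\<in>UNIV. \<pi> i * P i j) = \<pi> j)"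

definition var_dist :: "('a::finite \<Rightarrow> real) \<Rightarrow> ('a \<Rightarrow> real) \<Rightarrow> real" where
  "var_dist \<theta>1 \<theta>2 = (1/2) * (\<Sum>i\<in>UNIV. \<bar>\<theta>1 i - \<theta>2 i\<bar>)"

definition mixing_time_from :: "('a::finite \<Rightarrow> 'a \<Rightarrow> real) \<Rightarrow> ('a \<Rightarrow> real) \<Rightarrow> 'a \<Rightarrow> real \<Rightarrow> nat" where
  "mixing_time_from P \<pi> x \<epsilon> =
     (LEAST t. t > 0 \<and> (\<forall>t'\<ge>t. var_dist (mpow P t' x) \<pi> \<le> \<epsilon>))"

definition mixing_time :: "('a::finite \<Rightarrow> 'a \<Rightarrow> real) \<Rightarrow> ('a \<Rightarrow> real) \<Rightarrow> real \<Rightarrow> nat" where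
  "mixing_time P \<pi> \<epsilon> = Max (range (\<lambda>x. mixing_time_from P \<pi> x \<epsilon>))"

definition prob_set :: "('a::finite \<Rightarrow> real) \<Rightarrow> 'a set \<Rightarrow> real" where
  "prob_set \<pi> S = (\<Sum>i\<in>S. \<pi> i)"

definition conductance_set :: "('a::finite \<Rightarrow> 'a \<Rightarrow> real) \<Rightarrow> ('a \<Rightarrow> real) \<Rightarrow> 'a set \<Rightarrow> real" where
  "conductance_set P \<pi> S =
     ((\<Sum>i\<in>S. \<Sum>j\<in>-S. \<pi> i * P i j) + (\<Sum>i\<in>-S. \<Sum>j\<in>S. \<pi> i * P i j))
       / (2 * prob_set \<pi> S * prob_set \<pi> (-S))"

definition admissible_cut :: "('a::finite \<Rightarrow> real) \<Rightarrow> 'a set \<Rightarrow> bool" where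
  "admissible_cut \<pi> S \<longleftrightarrow> 0 < prob_set \<pi> S \<and> prob_set \<pi> S < 1"

definition conductance :: "('a::finite \<Rightarrow> 'a \<Rightarrow> real) \<Rightarrow> ('a \<Rightarrow> real) \<Rightarrow> real" where
  "conductance P \<pi> = Min (conductance_set P \<pi> ` {S. admissible_cut \<pi> S})"

end

theory Submission
  imports Defs
begin

text \<open>Let \<open>T\<close> be the mixing time and \<open>S\<close> a cut with \<open>\<pi>(-S) \<ge> 1/2\<close>. Run the chain from
  \<open>\<pi>\<close> restricted to \<open>S\<close>. This mass stays dominated by \<open>\<pi>\<close>, so per step at most the
  ergodic flow \<open>Q(S, -S)\<close> of it crosses into \<open>-S\<close>, i.e. at most \<open>T Q(S, -S)\<close> in \<open>T\<close> steps.
  But after \<open>T\<close> steps every row \<open>P\<^sup>T(x, \<cdot>)\<close> is \<open>\<epsilon>\<close>-close to \<open>\<pi>\<close>, so at least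
  \<open>\<pi>(S) (\<pi>(-S) - \<epsilon>)\<close> has crossed; dividing by \<open>2 \<pi>(S) \<pi>(-S)\<close> gives
  \<open>\<Phi>\<^sub>S \<ge> (1/2 - \<epsilon>) / T\<close>.

  That \<open>T\<close> is finite at all needs ergodicity: irreducibility and aperiodicity make some power
  \<open>P\<^sup>N\<close> strictly positive, and Doeblin's contraction then gives geometric convergence to \<open>\<pi>\<close>.\<close>

lemma add_closed_mult_mem:
  fixes S :: "nat set"
  assumes add_closed: "\<And>a b. a \<in> S \<Longrightarrow> b \<in> S \<Longrightarrow> a + b \<in> S" and "x \<in> S"
  shows "m * x \<in> insert 0 S"
proof (induction m)
  case 0
  then show ?case by simp
next
  case (Suc m)
  then show ?case using add_closed \<open>x \<in> S\<close> by (cases "m * x = 0") auto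
qed

text \<open>The least positive difference \<open>d\<close> of two elements \<open>b, b + d\<close> of \<open>S\<close> divides every
  \<open>t \<in> S\<close>: for \<open>q = t div d\<close>, the element \<open>t + (q + 1) b\<close> exceeds the element
  \<open>q (b + d) + b\<close> by \<open>t mod d\<close>.\<close>

lemma add_closed_Gcd_eq_1_consecutive:
  fixes S :: "nat set"
  assumes add_closed: "\<And>a b. a \<in> S \<Longrightarrow> b \<in> S \<Longrightarrow> a + b \<in> S"
    and "Gcd S = 1" and "0 \<notin> S"
  obtains b where "b \<in> S" "b + 1 \<in> S"
proof -
  define D where "D = {d. 0 < d \<and> (\<exists>b\<in>S. b + d \<in> S)}"
  obtain s where "s \<in> S" using \<open>Gcd S = 1\<close> by fastforce
  moreover have "0 < s" using \<open>s \<in> S\<close> \<open>0 \<notin> S\<close> by (cases s) auto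
  ultimately have "s \<in> D" unfolding D_def using add_closed by blast
  define d where "d = (LEAST d. d \<in> D)"
  have "d \<in> D" unfolding d_def using \<open>s \<in> D\<close> by (rule LeastI)
  then obtain b where b: "b \<in> S" "b + d \<in> S" and "0 < d" unfolding D_def by blast
  have "d dvd t" if "t \<in> S" for t
  proof -
    define q r where "q = t div d" and "r = t mod d"
    have "q * (b + d) + b \<in> S"
      using add_closed_mult_mem[OF add_closed b(2), of q] b(1) add_closed by auto
    moreover have "q * (b + d) + b + r \<in> S"
    proof -
      have "t + (q * b + b) \<in> S"
        using add_closed_mult_mem[OF add_closed b(1), of q] \<open>t \<in> S\<close> b(1) add_closed by auto
      moreover have "t = q * d + r" unfolding q_def r_def by simp
      ultimately show ?thesis by (simp add: algebra_simps)
    qed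
    ultimately have "r \<noteq> 0 \<Longrightarrow> r \<in> D" unfolding D_def by blast
    moreover have "r < d" unfolding r_def using \<open>0 < d\<close> by simp
    ultimately have "r = 0" unfolding d_def using Least_le not_le by metis
    then show ?thesis unfolding r_def by auto
  qed
  then have "d = 1" using \<open>Gcd S = 1\<close> by (metis Gcd_greatest nat_dvd_1_iff_1)
  then show thesis using b that by simp
qed

lemma add_closed_Gcd_eq_1_ge_mem:
  fixes S :: "nat set"
  assumes add_closed: "\<And>a b. a \<in> S \<Longrightarrow> b \<in> S \<Longrightarrow> a + b \<in> S"
    and "Gcd S = 1" and "0 \<notin> S"
  shows "\<exists>N. \<forall>n\<ge>N. n \<in> S"
proof -
  obtain b where b: "b \<in> S" "b + 1 \<in> S"
    using add_closed_Gcd_eq_1_consecutive[OF assms] .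
  have "0 < b" using b(1) \<open>0 \<notin> S\<close> by (cases b) auto
  have "n \<in> S" if "b * b \<le> n" for n
  proof -
    define k r where "k = n div b" and "r = n mod b"
    have "r < b" unfolding r_def using \<open>0 < b\<close> by simp
    moreover have "b \<le> k" unfolding k_def using that \<open>0 < b\<close> by (simp add: less_eq_div_iff_mult_less_eq)
    moreover have "n = k * b + r" unfolding k_def r_def by simp
    ultimately have "n = (k - r) * b + r * (b + 1)" by (simp add: algebra_simps)
    moreover have "(k - r) * b \<in> insert 0 S" using add_closed_mult_mem[OF add_closed b(1)] .
    moreover have "r * (b + 1) \<in> insert 0 S" using add_closed_mult_mem[OF add_closed b(2)] .
    moreover have "0 < n" using that \<open>0 < b\<close> by (metis mult_pos_pos order.strict_trans2)
    ultimately show "n \<in> S" using add_closed by auto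
  qed
  then show ?thesis by blast
qed

lemma mpow_add:
  fixes P :: "'a::finite \<Rightarrow> 'a \<Rightarrow> real"
  shows "mpow P (s + t) i j = (\<Sum>k\<in>UNIV. mpow P s i k * mpow P t k j)"
proof (induction t arbitrary: j)
  case 0
  have "(\<Sum>k\<in>UNIV. mpow P s i k * mpow P 0 k j) = (\<Sum>k\<in>UNIV. if k = j then mpow P s i k else 0)"
    by (rule sum.cong) auto
  then show ?case by simp
next
  case (Suc t)
  have "mpow P (s + Suc t) i j = (\<Sum>l\<in>UNIV. (\<Sum>k\<in>UNIV. mpow P s i k * mpow P t k l) * P l j)"
    using Suc by simp
  also have "\<dots> = (\<Sum>l\<in>UNIV. \<Sum>k\<in>UNIV. mpow P s i k * (mpow P t k l * P l j))"
    by (simp add: sum_distrib_right mult.assoc)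
  also have "\<dots> = (\<Sum>k\<in>UNIV. \<Sum>l\<in>UNIV. mpow P s i k * (mpow P t k l * P l j))"
    by (rule sum.swap)
  also have "\<dots> = (\<Sum>k\<in>UNIV. mpow P s i k * mpow P (Suc t) k j)"
    by (simp add: sum_distrib_left)
  finally show ?case .
qed

lemma mpow_nonneg:
  fixes P :: "'a::finite \<Rightarrow> 'a \<Rightarrow> real"
  assumes "stochastic P"
  shows "0 \<le> mpow P t i j"
  using assms by (induction t arbitrary: j) (auto simp: stochastic_def intro!: sum_nonneg)

lemma mpow_row_sum:
  fixes P :: "'a::finite \<Rightarrow> 'a \<Rightarrow> real"
  assumes "stochastic P"
  shows "(\<Sum>j\<in>UNIV. mpow P t i j) = 1"
proof (induction t)
  case 0
  then show ?case by simp
next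
  case (Suc t)
  have "(\<Sum>j\<in>UNIV. mpow P (Suc t) i j) = (\<Sum>j\<in>UNIV. \<Sum>k\<in>UNIV. mpow P t i k * P k j)"
    by simp
  also have "\<dots> = (\<Sum>k\<in>UNIV. \<Sum>j\<in>UNIV. mpow P t i k * P k j)"
    by (rule sum.swap)
  also have "\<dots> = (\<Sum>k\<in>UNIV. mpow P t i k)"
    using assms by (simp add: sum_distrib_left[symmetric] stochastic_def)
  finally show ?case using Suc by simp
qed

lemma mpow_mult_le_mpow_add:
  fixes P :: "'a::finite \<Rightarrow> 'a \<Rightarrow> real"
  assumes "stochastic P"
  shows "mpow P s i k * mpow P t k j \<le> mpow P (s + t) i j"
  unfolding mpow_add
  by (rule member_le_sum) (auto intro!: mult_nonneg_nonneg mpow_nonneg assms)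

lemma stationary_dist_mpow:
  fixes P :: "'a::finite \<Rightarrow> 'a \<Rightarrow> real"
  assumes "stationary_dist P \<pi>"
  shows "(\<Sum>i\<in>UNIV. \<pi> i * mpow P t i j) = \<pi> j"
proof (induction t arbitrary: j)
  case 0
  have "(\<Sum>i\<in>UNIV. \<pi> i * mpow P 0 i j) = (\<Sum>i\<in>UNIV. if i = j then \<pi> i else 0)"
    by (rule sum.cong) auto
  then show ?case by simp
next
  case (Suc t)
  have "(\<Sum>i\<in>UNIV. \<pi> i * mpow P (Suc t) i j) = (\<Sum>i\<in>UNIV. \<Sum>k\<in>UNIV. \<pi> i * mpow P t i k * P k j)"
    by (simp add: sum_distrib_left mult.assoc)
  also have "\<dots> = (\<Sum>k\<in>UNIV. \<Sum>i\<in>UNIV. \<pi> i * mpow P t i k * P k j)"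
    by (rule sum.swap)
  also have "\<dots> = (\<Sum>k\<in>UNIV. \<pi> k * P k j)"
    using Suc by (simp add: sum_distrib_right[symmetric])
  also have "\<dots> = \<pi> j" using assms by (simp add: stationary_dist_def)
  finally show ?case .
qed

lemma aperiodic_return_eventually_pos:
  fixes P :: "'a::finite \<Rightarrow> 'a \<Rightarrow> real"
  assumes "stochastic P" and "aperiodic_chain P"
  shows "\<forall>\<^sub>F n in sequentially. 0 < mpow P n i i"
proof -
  let ?S = "{t. 0 < t \<and> 0 < mpow P t i i}"
  have "a + b \<in> ?S" if "a \<in> ?S" "b \<in> ?S" for a b
    using that mpow_mult_le_mpow_add[OF assms(1), of a i i b i]
    by (auto intro: mult_pos_pos order.strict_trans2)
  moreover have "Gcd ?S = 1" using assms(2) by (simp add: aperiodic_chain_def)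
  ultimately obtain N where "\<forall>n\<ge>N. n \<in> ?S"
    using add_closed_Gcd_eq_1_ge_mem[of ?S] by auto
  then show ?thesis unfolding eventually_sequentially by auto
qed

lemma ergodic_mpow_pos:
  fixes P :: "'a::finite \<Rightarrow> 'a \<Rightarrow> real"
  assumes "ergodic_chain P"
  obtains N where "\<And>i j. 0 < mpow P N i j"
proof -
  have st: "stochastic P" and "aperiodic_chain P" and "irreducible_chain P"
    using assms by (auto simp: ergodic_chain_def)
  have "\<forall>\<^sub>F n in sequentially. \<forall>i. 0 < mpow P n i i"
    by (rule eventually_all_finite) (rule aperiodic_return_eventually_pos[OF st \<open>aperiodic_chain P\<close>])
  then obtain N0 where N0: "\<And>n i. N0 \<le> n \<Longrightarrow> 0 < mpow P n i i"
    unfolding eventually_sequentially by blast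
  obtain h where h: "\<And>i j. 0 < mpow P (h i j) i j"
    using \<open>irreducible_chain P\<close> unfolding irreducible_chain_def by metis
  define N where "N = N0 + Max (range (\<lambda>(i, j). h i j))"
  have "0 < mpow P N i j" for i j
  proof -
    have "h i j \<le> Max (range (\<lambda>(i, j). h i j))"
      by (rule Max_ge) (auto intro: image_eqI[where x = "(i, j)"])
    then have "N0 \<le> N - h i j" and N: "N - h i j + h i j = N" unfolding N_def by auto
    then have "0 < mpow P (N - h i j) i i * mpow P (h i j) i j" using N0 h by simp
    also have "\<dots> \<le> mpow P N i j" using mpow_mult_le_mpow_add[OF st] N by metis
    finally show ?thesis .
  qed
  then show thesis by (rule that)
qed

text \<open>Doeblin's contraction: since \<open>v\<close> sums to zero, lowering every entry of \<open>M\<close> by \<open>\<delta>\<close>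
  does not change \<open>v M\<close>, and the lowered rows have mass \<open>1 - n \<delta>\<close>.\<close>

lemma sum_abs_mult_stochastic_le:
  fixes M :: "'a::finite \<Rightarrow> 'a \<Rightarrow> real" and v :: "'a \<Rightarrow> real"
  assumes "\<And>i j. \<delta> \<le> M i j" and "\<And>i. (\<Sum>j\<in>UNIV. M i j) = 1"
    and "(\<Sum>i\<in>UNIV. v i) = 0"
  shows "(\<Sum>j\<in>UNIV. \<bar>\<Sum>i\<in>UNIV. v i * M i j\<bar>) \<le> (1 - real CARD('a) * \<delta>) * (\<Sum>i\<in>UNIV. \<bar>v i\<bar>)"
proof -
  have shift: "(\<Sum>i\<in>UNIV. v i * M i j) = (\<Sum>i\<in>UNIV. v i * (M i j - \<delta>))" for j
    using assms(3) by (simp add: right_diff_distrib sum_subtractf flip: sum_distrib_right)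
  have "(\<Sum>j\<in>UNIV. \<bar>\<Sum>i\<in>UNIV. v i * M i j\<bar>) \<le> (\<Sum>j\<in>UNIV. \<Sum>i\<in>UNIV. \<bar>v i\<bar> * (M i j - \<delta>))"
    unfolding shift using assms(1) by (intro sum_mono order.trans[OF sum_abs]) (simp add: abs_mult)
  also have "\<dots> = (\<Sum>i\<in>UNIV. \<Sum>j\<in>UNIV. \<bar>v i\<bar> * (M i j - \<delta>))"
    by (rule sum.swap)
  also have "\<dots> = (\<Sum>i\<in>UNIV. \<bar>v i\<bar> * (1 - real CARD('a) * \<delta>))"
    using assms(2) by (simp add: sum_subtractf flip: sum_distrib_left)
  finally show ?thesis by (simp add: sum_distrib_right mult.commute)
qed

lemma var_dist_mpow_add_le:
  fixes P :: "'a::finite \<Rightarrow> 'a \<Rightarrow> real"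
  assumes st: "stochastic P" and sd: "stationary_dist P \<pi>" and "\<And>i j. \<delta> \<le> mpow P s i j"
  shows "var_dist (mpow P (t + s) x) \<pi> \<le> (1 - real CARD('a) * \<delta>) * var_dist (mpow P t x) \<pi>"
proof -
  define w where "w j = mpow P t x j - \<pi> j" for j
  have "(\<Sum>j\<in>UNIV. w j) = 0"
    using mpow_row_sum[OF st] sd by (simp add: w_def sum_subtractf stationary_dist_def)
  moreover have "mpow P (t + s) x j - \<pi> j = (\<Sum>i\<in>UNIV. w i * mpow P s i j)" for j
    by (simp add: w_def left_diff_distrib sum_subtractf mpow_add stationary_dist_mpow[OF sd])
  ultimately show ?thesis
    using sum_abs_mult_stochastic_le[OF assms(3) mpow_row_sum[OF st], of w]
    unfolding var_dist_def w_def by simp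
qed

lemma var_dist_mpow_antimono:
  fixes P :: "'a::finite \<Rightarrow> 'a \<Rightarrow> real"
  assumes "stochastic P" and "stationary_dist P \<pi>" and "t \<le> t'"
  shows "var_dist (mpow P t' x) \<pi> \<le> var_dist (mpow P t x) \<pi>"
proof -
  have "var_dist (mpow P (t + (t' - t)) x) \<pi> \<le> (1 - real CARD('a) * 0) * var_dist (mpow P t x) \<pi>"
    by (rule var_dist_mpow_add_le[OF assms(1,2) mpow_nonneg[OF assms(1)]])
  then show ?thesis using assms(3) by simp
qed

lemma ergodic_var_dist_eventually_le:
  fixes P :: "'a::finite \<Rightarrow> 'a \<Rightarrow> real"
  assumes erg: "ergodic_chain P" and sd: "stationary_dist P \<pi>" and "0 < \<epsilon>"
  shows "\<exists>T. \<forall>t\<ge>T. var_dist (mpow P t x) \<pi> \<le> \<epsilon>"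
proof -
  have st: "stochastic P" using erg by (simp add: ergodic_chain_def)
  obtain N where N: "\<And>i j. 0 < mpow P N i j" using ergodic_mpow_pos[OF erg] by blast
  define \<delta> where "\<delta> = Min (range (\<lambda>(i, j). mpow P N i j))"
  have \<delta>_le: "\<delta> \<le> mpow P N i j" for i j
    unfolding \<delta>_def by (rule Min_le) (auto intro: image_eqI[where x = "(i, j)"])
  have "0 < \<delta>" unfolding \<delta>_def using N by (subst Min_gr_iff) auto
  define c where "c = 1 - real CARD('a) * \<delta>"
  have "real CARD('a) * \<delta> = (\<Sum>j\<in>(UNIV :: 'a set). \<delta>)" by simp
  also have "\<dots> \<le> (\<Sum>j\<in>UNIV. mpow P N x j)" by (intro sum_mono \<delta>_le)
  finally have "0 \<le> c" "c < 1" unfolding c_def mpow_row_sum[OF st] using \<open>0 < \<delta>\<close> by auto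
  define V where "V t = var_dist (mpow P t x) \<pi>" for t
  have V_geometric: "V (k * N) \<le> c ^ k * V 0" for k
  proof (induction k)
    case 0
    then show ?case by simp
  next
    case (Suc k)
    have "V (k * N + N) \<le> c * V (k * N)"
      unfolding V_def c_def by (rule var_dist_mpow_add_le[OF st sd \<delta>_le])
    also have "\<dots> \<le> c * (c ^ k * V 0)" using Suc \<open>0 \<le> c\<close> by (rule mult_left_mono)
    finally show ?case by (simp add: add.commute)
  qed
  have "(\<lambda>k. c ^ k * V 0) \<longlonglongrightarrow> 0"
    using \<open>0 \<le> c\<close> \<open>c < 1\<close> by (intro tendsto_mult_left_zero LIMSEQ_power_zero) simp
  then have "\<forall>\<^sub>F k in sequentially. c ^ k * V 0 < \<epsilon>"
    using \<open>0 < \<epsilon>\<close> by (rule order_tendstoD(2))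
  then obtain k where "c ^ k * V 0 < \<epsilon>"
    unfolding eventually_sequentially by blast
  have "V t \<le> \<epsilon>" if "k * N \<le> t" for t
    using var_dist_mpow_antimono[OF st sd that, of x] V_geometric[of k] \<open>c ^ k * V 0 < \<epsilon>\<close>
    unfolding V_def by linarith
  then show ?thesis unfolding V_def by blast
qed

lemma mixing_time_from_spec:
  fixes P :: "'a::finite \<Rightarrow> 'a \<Rightarrow> real"
  assumes "ergodic_chain P" and "stationary_dist P \<pi>" and "0 < \<epsilon>"
  shows "0 < mixing_time_from P \<pi> x \<epsilon> \<and>
    (\<forall>t\<ge>mixing_time_from P \<pi> x \<epsilon>. var_dist (mpow P t x) \<pi> \<le> \<epsilon>)"
proof -
  obtain T where "\<forall>t\<ge>T. var_dist (mpow P t x) \<pi> \<le> \<epsilon>"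
    using ergodic_var_dist_eventually_le[OF assms] by blast
  then have "0 < Suc T \<and> (\<forall>t\<ge>Suc T. var_dist (mpow P t x) \<pi> \<le> \<epsilon>)" by simp
  then show ?thesis unfolding mixing_time_from_def by (rule LeastI)
qed

lemma mixing_time_from_le_mixing_time:
  "mixing_time_from P \<pi> x \<epsilon> \<le> mixing_time P \<pi> \<epsilon>"
  unfolding mixing_time_def by (rule Max_ge) auto

lemma mixing_time_pos:
  fixes P :: "'a::finite \<Rightarrow> 'a \<Rightarrow> real"
  assumes "ergodic_chain P" and "stationary_dist P \<pi>" and "0 < \<epsilon>"
  shows "0 < mixing_time P \<pi> \<epsilon>"
  using mixing_time_from_spec[OF assms, of undefined] mixing_time_from_le_mixing_time
  by (metis order.strict_trans2)

lemma var_dist_mixing_time_le: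
  fixes P :: "'a::finite \<Rightarrow> 'a \<Rightarrow> real"
  assumes "ergodic_chain P" and "stationary_dist P \<pi>" and "0 < \<epsilon>"
  shows "var_dist (mpow P (mixing_time P \<pi> \<epsilon>) x) \<pi> \<le> \<epsilon>"
  using mixing_time_from_spec[OF assms, of x] mixing_time_from_le_mixing_time by blast

lemma sum_add_sum_Compl:
  fixes f :: "'a::finite \<Rightarrow> real"
  shows "sum f A + sum f (- A) = sum f UNIV"
  by (subst sum.union_disjoint[symmetric]) (auto simp: Compl_partition)

lemma abs_sum_diff_le_var_dist:
  fixes p q :: "'a::finite \<Rightarrow> real"
  assumes "(\<Sum>j\<in>UNIV. p j) = (\<Sum>j\<in>UNIV. q j)"
  shows "\<bar>\<Sum>j\<in>B. p j - q j\<bar> \<le> var_dist p q"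
proof -
  define f where "f j = p j - q j" for j
  have "(\<Sum>j\<in>B. f j) + (\<Sum>j\<in>-B. f j) = 0"
    using assms sum_add_sum_Compl[of p B] sum_add_sum_Compl[of q B] by (simp add: f_def sum_subtractf)
  then have "2 * \<bar>\<Sum>j\<in>B. f j\<bar> = \<bar>\<Sum>j\<in>B. f j\<bar> + \<bar>\<Sum>j\<in>-B. f j\<bar>" by simp
  also have "\<dots> \<le> (\<Sum>j\<in>B. \<bar>f j\<bar>) + (\<Sum>j\<in>-B. \<bar>f j\<bar>)" by (intro add_mono sum_abs)
  finally show ?thesis unfolding var_dist_def f_def sum_add_sum_Compl by simp
qed

definition ergodic_flow :: "('a::finite \<Rightarrow> 'a \<Rightarrow> real) \<Rightarrow> ('a \<Rightarrow> real) \<Rightarrow> 'a set \<Rightarrow> 'a set \<Rightarrow> real"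
  where "ergodic_flow P \<pi> A B = (\<Sum>i\<in>A. \<Sum>j\<in>B. \<pi> i * P i j)"

lemma ergodic_flow_nonneg:
  assumes "stochastic P" and "stationary_dist P \<pi>"
  shows "0 \<le> ergodic_flow P \<pi> A B"
  using assms unfolding ergodic_flow_def stochastic_def stationary_dist_def
  by (intro sum_nonneg mult_nonneg_nonneg) auto

lemma stationary_sum_mpow_le:
  fixes P :: "'a::finite \<Rightarrow> 'a \<Rightarrow> real"
  assumes "stochastic P" and "stationary_dist P \<pi>"
  shows "(\<Sum>x\<in>A. \<pi> x * mpow P t x j) \<le> \<pi> j"
proof -
  have "(\<Sum>x\<in>A. \<pi> x * mpow P t x j) \<le> (\<Sum>x\<in>UNIV. \<pi> x * mpow P t x j)"
    using assms by (intro sum_mono2 mult_nonneg_nonneg mpow_nonneg) (auto simp: stationary_dist_def)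
  then show ?thesis using stationary_dist_mpow[OF assms(2)] by simp
qed

text \<open>The part of \<open>\<pi>\<close> that starts in \<open>A\<close> stays below \<open>\<pi>\<close>, so in each step at most
  \<open>Q(A, -A)\<close> of it can leave \<open>A\<close>.\<close>

lemma ergodic_flow_mpow_le:
  fixes P :: "'a::finite \<Rightarrow> 'a \<Rightarrow> real"
  assumes st: "stochastic P" and sd: "stationary_dist P \<pi>"
  shows "ergodic_flow (mpow P t) \<pi> A (- A) \<le> real t * ergodic_flow P \<pi> A (- A)"
proof -
  define \<mu> where "\<mu> t j = (\<Sum>x\<in>A. \<pi> x * mpow P t x j)" for t j
  have P_nonneg: "0 \<le> P i j" and P_out: "(\<Sum>j\<in>-A. P i j) \<le> 1" for i j
    using st sum_mono2[of UNIV "- A" "P i"] unfolding stochastic_def by auto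
  have \<mu>_nonneg: "0 \<le> \<mu> t j" for t j
    using sd unfolding \<mu>_def stationary_dist_def
    by (intro sum_nonneg mult_nonneg_nonneg mpow_nonneg[OF st]) auto
  have flow_eq: "ergodic_flow (mpow P t) \<pi> A (- A) = (\<Sum>j\<in>-A. \<mu> t j)" for t
    unfolding ergodic_flow_def \<mu>_def by (rule sum.swap)
  have \<mu>_Suc: "\<mu> (Suc t) j = (\<Sum>k\<in>UNIV. \<mu> t k * P k j)" for t j
  proof -
    have "\<mu> (Suc t) j = (\<Sum>x\<in>A. \<Sum>k\<in>UNIV. \<pi> x * mpow P t x k * P k j)"
      unfolding \<mu>_def by (simp add: sum_distrib_left mult.assoc)
    also have "\<dots> = (\<Sum>k\<in>UNIV. \<Sum>x\<in>A. \<pi> x * mpow P t x k * P k j)" by (rule sum.swap)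
    finally show ?thesis unfolding \<mu>_def by (simp add: sum_distrib_right)
  qed
  have step: "(\<Sum>j\<in>-A. \<mu> (Suc t) j) \<le> ergodic_flow P \<pi> A (- A) + (\<Sum>j\<in>-A. \<mu> t j)" for t
  proof -
    have "(\<Sum>j\<in>-A. \<mu> (Suc t) j) = (\<Sum>k\<in>UNIV. \<Sum>j\<in>-A. \<mu> t k * P k j)"
      unfolding \<mu>_Suc by (rule sum.swap)
    also have "\<dots> = (\<Sum>k\<in>A. \<mu> t k * (\<Sum>j\<in>-A. P k j)) + (\<Sum>k\<in>-A. \<mu> t k * (\<Sum>j\<in>-A. P k j))"
      by (simp add: sum_add_sum_Compl sum_distrib_left)
    also have "\<dots> \<le> (\<Sum>k\<in>A. \<pi> k * (\<Sum>j\<in>-A. P k j)) + (\<Sum>k\<in>-A. \<mu> t k)"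
      using stationary_sum_mpow_le[OF st sd] P_nonneg P_out \<mu>_nonneg
      by (intro add_mono sum_mono mult_right_mono mult_left_le sum_nonneg) (auto simp: \<mu>_def)
    finally show ?thesis by (simp add: ergodic_flow_def sum_distrib_left)
  qed
  have "ergodic_flow (mpow P 0) \<pi> A (- A) = 0"
    unfolding ergodic_flow_def by (auto intro!: sum.neutral)
  then show ?thesis
    unfolding flow_eq
    by (induction t) (auto simp: algebra_simps intro: order.trans[OF step])
qed

lemma prob_set_mult_le_ergodic_flow:
  fixes P :: "'a::finite \<Rightarrow> 'a \<Rightarrow> real"
  assumes st: "stochastic P" and sd: "stationary_dist P \<pi>"
    and mixed: "\<And>x. var_dist (mpow P T x) \<pi> \<le> \<epsilon>"
  shows "prob_set \<pi> A * (prob_set \<pi> (- A) - \<epsilon>) \<le> real T * ergodic_flow P \<pi> A (- A)"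
proof -
  have escape: "prob_set \<pi> (- A) - \<epsilon> \<le> (\<Sum>j\<in>-A. mpow P T x j)" for x
  proof -
    have "\<bar>\<Sum>j\<in>-A. mpow P T x j - \<pi> j\<bar> \<le> var_dist (mpow P T x) \<pi>"
      by (rule abs_sum_diff_le_var_dist) (use sd in \<open>simp add: mpow_row_sum[OF st] stationary_dist_def\<close>)
    then have "\<bar>\<Sum>j\<in>-A. mpow P T x j - \<pi> j\<bar> \<le> \<epsilon>" using mixed[of x] by linarith
    then show ?thesis unfolding prob_set_def by (simp add: sum_subtractf)
  qed
  have "prob_set \<pi> A * (prob_set \<pi> (- A) - \<epsilon>) = (\<Sum>x\<in>A. \<pi> x * (prob_set \<pi> (- A) - \<epsilon>))"
    unfolding prob_set_def by (simp add: sum_distrib_right)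
  also have "\<dots> \<le> (\<Sum>x\<in>A. \<pi> x * (\<Sum>j\<in>-A. mpow P T x j))"
    using sd by (intro sum_mono mult_left_mono escape) (simp add: stationary_dist_def)
  also have "\<dots> = ergodic_flow (mpow P T) \<pi> A (- A)"
    by (simp add: ergodic_flow_def sum_distrib_left)
  also have "\<dots> \<le> real T * ergodic_flow P \<pi> A (- A)"
    by (rule ergodic_flow_mpow_le[OF st sd])
  finally show ?thesis .
qed

lemma conductance_set_eq:
  "conductance_set P \<pi> S =
    (ergodic_flow P \<pi> S (- S) + ergodic_flow P \<pi> (- S) S) / (2 * prob_set \<pi> S * prob_set \<pi> (- S))"
  unfolding conductance_set_def ergodic_flow_def ..

lemma conductance_set_Compl: "conductance_set P \<pi> (- S) = conductance_set P \<pi> S"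
  unfolding conductance_set_eq by (simp add: ac_simps)

lemma conductance_set_ge_if_Compl_large:
  fixes P :: "'a::finite \<Rightarrow> 'a \<Rightarrow> real"
  assumes st: "stochastic P" and sd: "stationary_dist P \<pi>"
    and mixed: "\<And>x. var_dist (mpow P T x) \<pi> \<le> \<epsilon>" and "0 < T" and "0 \<le> \<epsilon>"
    and "0 < prob_set \<pi> S" and "1/2 \<le> prob_set \<pi> (- S)"
  shows "(1/2 - \<epsilon>) / real T \<le> conductance_set P \<pi> S"
proof -
  define a b where "a = prob_set \<pi> S" and "b = prob_set \<pi> (- S)"
  have "0 < a" "1/2 \<le> b" "0 < real T" using assms unfolding a_def b_def by auto
  have "(1/2 - \<epsilon>) * (2 * b) \<le> b - \<epsilon>"
    using \<open>0 \<le> \<epsilon>\<close> \<open>1/2 \<le> b\<close> mult_left_mono[of 1 "2 * b" \<epsilon>] by (simp add: algebra_simps)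
  then have "1/2 - \<epsilon> \<le> (b - \<epsilon>) / (2 * b)"
    using \<open>1/2 \<le> b\<close> by (simp add: pos_le_divide_eq)
  then have "(1/2 - \<epsilon>) / real T \<le> (b - \<epsilon>) / (2 * b) / real T"
    using \<open>0 < real T\<close> by (intro divide_right_mono) simp_all
  also have "\<dots> = a * (b - \<epsilon>) / real T / (2 * a * b)"
    using \<open>0 < a\<close> by simp
  also have "\<dots> \<le> ergodic_flow P \<pi> S (- S) / (2 * a * b)"
    using prob_set_mult_le_ergodic_flow[OF st sd mixed, of S] \<open>0 < a\<close> \<open>1/2 \<le> b\<close> \<open>0 < real T\<close>
    unfolding a_def b_def by (intro divide_right_mono) (simp_all add: pos_divide_le_eq mult.commute)
  also have "\<dots> \<le> conductance_set P \<pi> S"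
    unfolding conductance_set_eq a_def[symmetric] b_def[symmetric]
    using ergodic_flow_nonneg[OF st sd] \<open>0 < a\<close> \<open>1/2 \<le> b\<close> by (intro divide_right_mono) auto
  finally show ?thesis .
qed

lemma conductance_set_ge:
  fixes P :: "'a::finite \<Rightarrow> 'a \<Rightarrow> real"
  assumes st: "stochastic P" and sd: "stationary_dist P \<pi>"
    and mixed: "\<And>x. var_dist (mpow P T x) \<pi> \<le> \<epsilon>" and "0 < T" and "0 \<le> \<epsilon>"
    and "admissible_cut \<pi> S"
  shows "(1/2 - \<epsilon>) / real T \<le> conductance_set P \<pi> S"
proof -
  have "prob_set \<pi> S + prob_set \<pi> (- S) = 1"
    using sd by (simp add: prob_set_def sum_add_sum_Compl stationary_dist_def)
  then consider "0 < prob_set \<pi> S" "1/2 \<le> prob_set \<pi> (- S)"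
    | "0 < prob_set \<pi> (- S)" "1/2 \<le> prob_set \<pi> S"
    using \<open>admissible_cut \<pi> S\<close> unfolding admissible_cut_def by fastforce
  then show ?thesis
  proof cases
    case 1
    then show ?thesis by (rule conductance_set_ge_if_Compl_large[OF st sd mixed \<open>0 < T\<close> \<open>0 \<le> \<epsilon>\<close>])
  next
    case 2
    then show ?thesis
      using conductance_set_ge_if_Compl_large[OF st sd mixed \<open>0 < T\<close> \<open>0 \<le> \<epsilon>\<close>, of "- S"]
      by (simp add: conductance_set_Compl)
  qed
qed

theorem theorem17:
  fixes P :: "'a::finite \<Rightarrow> 'a \<Rightarrow> real" and \<pi> :: "'a \<Rightarrow> real"
  assumes "ergodic_chain P"
    and "stationary_dist P \<pi>"
    and "\<exists>S. admissible_cut \<pi> S"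
  shows "conductance P \<pi> \<ge> (1/2 - 1/(2 * exp 1)) / real (mixing_time P \<pi> (1/(2 * exp 1)))"
proof -
  define \<epsilon> :: real where "\<epsilon> = 1/(2 * exp 1)"
  have "0 < \<epsilon>" unfolding \<epsilon>_def by simp
  have "stochastic P" using assms(1) by (simp add: ergodic_chain_def)
  have "(1/2 - \<epsilon>) / real (mixing_time P \<pi> \<epsilon>) \<le> conductance_set P \<pi> S"
    if "admissible_cut \<pi> S" for S
    using conductance_set_ge[OF \<open>stochastic P\<close> assms(2) var_dist_mixing_time_le[OF assms(1,2) \<open>0 < \<epsilon>\<close>]
        mixing_time_pos[OF assms(1,2) \<open>0 < \<epsilon>\<close>] less_imp_le[OF \<open>0 < \<epsilon>\<close>] that] .
  then show ?thesis
    unfolding conductance_def \<epsilon>_def[symmetric] using assms(3) by (subst Min_ge_iff) auto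
qed

end
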